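(* Let $n$ be even and let $g\in\mathbb{R}^n$, with order statistics $g_{(1)}\le g_{(2)}\le\dots\le g_{(n)}$. Let $\mathcal{S}\subseteq\{1,\dots,n\}$ be a solution of $$\max_{S\subseteq\{1,\dots,n\}}\ \sum_{i\in S} g_i\quad\text{subject to}\quad \sum_{i\in S} g_i\le\tfrac12\sum_{i=1}^n g_i,\quad |S|=\tfrac n2 .$$ Then $$\Big(\sum_{i\in\mathcal{S}}g_i-\sum_{i\in\mathcal{S}^c}g_i\Big)^2\le\sum_{i=1}^{n/2}\big(g_{(2i)}-g_{(2i-1)}\big)^2 .$$
   Context: In the paper $g_i=\mathbb{E}[Y_i(1)+Y_i(0)\mid X_i]$ for units with covariates $X_i$ and potential outcomes $Y_i(1),Y_i(0)$; the left side (divided by $n^2$) is the design-dependent part of the conditional variance of the IPW estimator under the design that assigns treatment $Z^*\sim\mathrm{Bern}(1/2)$ to all of $\mathcal{S}$ and $1-Z^*$ to all of $\mathcal{S}^c$, and the right side (divided by $n^2$) is the corresponding term for the matched-pair design pairing consecutive units sorted by $g$. $\mathcal{S}^c$ denotes the complement of $\mathcal{S}$ in $\{1,\dots,n\}$. *)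

theory Defs
  imports Complex_Main
begin

definition order_stat :: "(nat \<Rightarrow> real) \<Rightarrow> nat \<Rightarrow> nat \<Rightarrow> real" where
  "order_stat g n k = sort (map g [1..<n+1]) ! (k - 1)"

end

theory Submission
  imports Defs "HOL-Combinatorics.List_Permutation"
begin

text \<open>Pair the sorted values as (g_(1), g_(2)), (g_(3), g_(4)), ... and build a half U by taking
one element of each pair, always the one that moves the running imbalance
D = sum over U minus sum over the complement towards zero. Since (D + e)^2 \<le> D^2 + e^2
whenever D e \<le> 0, the final squared imbalance is at most the sum of the squared pair gaps.
Replacing U by its complement if necessary, D(U) \<le> 0, i.e. U is feasible; optimality of S
then gives D(U) \<le> D(S) \<le> 0, hence D(S)^2 \<le> D(U)^2.\<close>

definition split_imbalance :: "('a \<Rightarrow> 'b::ab_group_add) \<Rightarrow> 'a set \<Rightarrow> 'a set \<Rightarrow> 'b" where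
  "split_imbalance h A T = sum h T - sum h (A - T)"

lemma split_imbalance_complement:
  assumes "T \<subseteq> A"
  shows "split_imbalance h A (A - T) = - split_imbalance h A T"
  using assms by (simp add: split_imbalance_def double_diff)

lemma split_imbalance_eq:
  fixes h :: "'a \<Rightarrow> 'b::ring_1"
  assumes "finite A" "T \<subseteq> A"
  shows "split_imbalance h A T = 2 * sum h T - sum h A"
proof -
  have "finite T"
    using assms finite_subset by blast
  then show ?thesis
    using assms by (simp add: split_imbalance_def sum_diff mult_2)
qed

lemma split_imbalance_image:
  assumes "inj_on p A" "T \<subseteq> A"
  shows "split_imbalance g (p ` A) (p ` T) = split_imbalance (g \<circ> p) A T"
proof -
  have "p ` A - p ` T = p ` (A - T)"
    using assms by (simp add: inj_on_image_set_diff)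
  then show ?thesis
    using assms by (simp add: split_imbalance_def sum.reindex inj_on_subset)
qed

lemma split_imbalance_insert_pair:
  assumes "finite A" "T \<subseteq> A" "a \<notin> A" "b \<notin> A" "a \<noteq> b"
  shows "split_imbalance h (insert a (insert b A)) (insert a T)
           = split_imbalance h A T + (h a - h b)"
proof -
  have "insert a (insert b A) - insert a T = insert b (A - T)"
    using assms by auto
  moreover have "finite T" "a \<notin> T"
    using assms finite_subset by blast+
  ultimately show ?thesis
    using assms by (simp add: split_imbalance_def)
qed

lemma exists_half_split_imbalance_sq_le:
  fixes h :: "nat \<Rightarrow> 'a::linordered_idom"
  shows "\<exists>T \<subseteq> {..<2*m}. card T = m \<and>
           (split_imbalance h {..<2*m} T)\<^sup>2 \<le> (\<Sum>i<m. (h (2*i+1) - h (2*i))\<^sup>2)"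
proof (induction m)
  case 0
  show ?case by (simp add: split_imbalance_def)
next
  case (Suc m)
  then obtain T where T: "T \<subseteq> {..<2*m}" "card T = m"
    and bound: "(split_imbalance h {..<2*m} T)\<^sup>2 \<le> (\<Sum>i<m. (h (2*i+1) - h (2*i))\<^sup>2)"
    by blast
  define D where "D = split_imbalance h {..<2*m} T"
  obtain a b where ab: "(a, b) = (2*m, 2*m+1) \<or> (a, b) = (2*m+1, 2*m)"
    and opposite: "D * (h a - h b) \<le> 0"
  proof (cases "D * (h (2*m+1) - h (2*m)) \<le> 0")
    case True
    then show ?thesis using that[of "2*m+1" "2*m"] by simp
  next
    case False
    then show ?thesis using that[of "2*m" "2*m+1"] by (simp add: algebra_simps)
  qed
  have "{..<2 * Suc m} = insert (2*m) (insert (2*m+1) {..<2*m})"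
    by auto
  then have ivl: "{..<2 * Suc m} = insert a (insert b {..<2*m})"
    using ab by (auto simp: insert_commute)
  have ab_fresh: "a \<notin> {..<2*m}" "b \<notin> {..<2*m}" "a \<noteq> b"
    using ab by auto
  have gap: "(h a - h b)\<^sup>2 = (h (2*m+1) - h (2*m))\<^sup>2"
    using ab by (auto simp: power2_commute)
  have "(split_imbalance h {..<2 * Suc m} (insert a T))\<^sup>2 = (D + (h a - h b))\<^sup>2"
    unfolding ivl D_def using T ab_fresh by (simp add: split_imbalance_insert_pair)
  also have "\<dots> \<le> D\<^sup>2 + (h a - h b)\<^sup>2"
    using opposite by (simp add: power2_sum)
  also have "\<dots> \<le> (\<Sum>i<Suc m. (h (2*i+1) - h (2*i))\<^sup>2)"
    using bound gap by (simp add: D_def)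
  finally have "(split_imbalance h {..<2 * Suc m} (insert a T))\<^sup>2
                  \<le> (\<Sum>i<Suc m. (h (2*i+1) - h (2*i))\<^sup>2)" .
  moreover have "insert a T \<subseteq> {..<2 * Suc m}"
    using T(1) ivl by blast
  moreover have "card (insert a T) = Suc m"
  proof -
    have "finite T" "a \<notin> T"
      using T(1) ab_fresh(1) finite_subset by auto
    then show ?thesis
      using T(2) by simp
  qed
  ultimately show ?case
    by blast
qed

lemma exists_half_split_imbalance_nonpos:
  fixes h :: "nat \<Rightarrow> 'a::linordered_idom"
  shows "\<exists>T \<subseteq> {..<2*m}. card T = m \<and> split_imbalance h {..<2*m} T \<le> 0 \<and>
           (split_imbalance h {..<2*m} T)\<^sup>2 \<le> (\<Sum>i<m. (h (2*i+1) - h (2*i))\<^sup>2)"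
proof -
  obtain T where T: "T \<subseteq> {..<2*m}" "card T = m"
    and bound: "(split_imbalance h {..<2*m} T)\<^sup>2 \<le> (\<Sum>i<m. (h (2*i+1) - h (2*i))\<^sup>2)"
    using exists_half_split_imbalance_sq_le by blast
  show ?thesis
  proof (cases "split_imbalance h {..<2*m} T \<le> 0")
    case True
    then show ?thesis using T bound by blast
  next
    case False
    have "card ({..<2*m} - T) = m"
      using T card_Diff_subset[OF finite_subset[OF T(1)]] by simp
    then show ?thesis
      using T bound False
      by (intro exI[of _ "{..<2*m} - T"]) (simp add: split_imbalance_complement)
  qed
qed

lemma split_imbalance_sq_le_of_sum_le:
  fixes g :: "'a \<Rightarrow> 'b::linordered_idom"
  assumes "finite A" "S \<subseteq> A" "U \<subseteq> A"
    and "split_imbalance g A S \<le> 0" "sum g U \<le> sum g S"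
  shows "(split_imbalance g A S)\<^sup>2 \<le> (split_imbalance g A U)\<^sup>2"
proof -
  have "split_imbalance g A U \<le> split_imbalance g A S"
    using assms by (simp add: split_imbalance_eq)
  then have "\<bar>split_imbalance g A S\<bar> \<le> \<bar>split_imbalance g A U\<bar>"
    using assms(4) by linarith
  then show ?thesis
    by (simp only: abs_le_square_iff)
qed

lemma order_stat_bij:
  obtains p where "bij_betw p {..<n} {1..n}"
    and "\<And>k. k < n \<Longrightarrow> order_stat g n (Suc k) = g (p k)"
proof -
  define L where "L = map g [1..<n+1]"
  have "sort L <~~> L" "length L = n"
    by (simp_all add: L_def)
  then obtain f where f: "bij_betw f {..<n} {..<n}" and sorted: "\<forall>k<n. sort L ! k = L ! f k"
    using permutation_Ex_bij[of "sort L" L] by auto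
  have "bij_betw Suc {..<n} {1..n}"
    by (simp add: bij_betw_def image_Suc_lessThan)
  with f have "bij_betw (Suc \<circ> f) {..<n} {1..n}"
    by (rule bij_betw_trans)
  moreover have "order_stat g n (Suc k) = g ((Suc \<circ> f) k)" if "k < n" for k
  proof -
    have "f k < n" using f that by (auto simp: bij_betw_def)
    then show ?thesis
      using sorted that by (simp add: order_stat_def L_def del: upt_Suc)
  qed
  ultimately show ?thesis by (rule that)
qed

lemma sum_sq_order_stat_pair_gaps:
  assumes "n = 2*m" and "\<And>k. k < n \<Longrightarrow> order_stat g n (Suc k) = h k"
  shows "(\<Sum>i=1..m. (order_stat g n (2*i) - order_stat g n (2*i - 1))\<^sup>2)
           = (\<Sum>i<m. (h (2*i+1) - h (2*i))\<^sup>2)"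
    (is "sum ?gap {1..m} = _")
proof -
  have "sum ?gap {1..m} = sum ?gap (Suc ` {..<m})"
    by (simp add: image_Suc_lessThan)
  also have "\<dots> = (\<Sum>i<m. ?gap (Suc i))"
    by (simp add: sum.reindex)
  also have "\<dots> = (\<Sum>i<m. (h (2*i+1) - h (2*i))\<^sup>2)"
  proof (rule sum.cong)
    fix i
    assume "i \<in> {..<m}"
    moreover have "2 * Suc i = Suc (2*i + 1)" "2 * Suc i - 1 = Suc (2*i)"
      by simp_all
    ultimately show "?gap (Suc i) = (h (2*i+1) - h (2*i))\<^sup>2"
      using assms by (simp only:) simp
  qed simp
  finally show ?thesis .
qed

theorem theorem2:
  fixes n :: nat and g :: "nat \<Rightarrow> real" and S :: "nat set"
  assumes "even n"
    and "S \<subseteq> {1..n}"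
    and "card S = n div 2"
    and "(\<Sum>i\<in>S. g i) \<le> (1/2) * (\<Sum>i\<in>{1..n}. g i)"
    and "\<And>T. T \<subseteq> {1..n} \<Longrightarrow> card T = n div 2 \<Longrightarrow>
           (\<Sum>i\<in>T. g i) \<le> (1/2) * (\<Sum>i\<in>{1..n}. g i) \<Longrightarrow>
           (\<Sum>i\<in>T. g i) \<le> (\<Sum>i\<in>S. g i)"
  shows "((\<Sum>i\<in>S. g i) - (\<Sum>i\<in>{1..n} - S. g i))\<^sup>2
         \<le> (\<Sum>i=1..n div 2. (order_stat g n (2*i) - order_stat g n (2*i - 1))\<^sup>2)"
proof -
  define m where "m = n div 2"
  have n: "n = 2*m" using assms(1) by (simp add: m_def)
  obtain p where p: "bij_betw p {..<n} {1..n}"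
    and order_stat_p: "\<And>k. k < n \<Longrightarrow> order_stat g n (Suc k) = g (p k)"
    using order_stat_bij[of n g] by blast
  obtain T where T: "T \<subseteq> {..<n}" "card T = m"
    and T_nonpos: "split_imbalance (g \<circ> p) {..<n} T \<le> 0"
    and T_bound: "(split_imbalance (g \<circ> p) {..<n} T)\<^sup>2 \<le> (\<Sum>i<m. (g (p (2*i+1)) - g (p (2*i)))\<^sup>2)"
    using exists_half_split_imbalance_nonpos[of m "g \<circ> p"] n by auto
  have inj: "inj_on p {..<n}" and onto: "p ` {..<n} = {1..n}"
    using p by (auto simp: bij_betw_def)
  have "inj_on p T"
    using inj T(1) by (rule inj_on_subset)
  then have U: "p ` T \<subseteq> {1..n}" "card (p ` T) = n div 2"
    using T onto by (auto simp: card_image m_def)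
  have U_imbalance: "split_imbalance g {1..n} (p ` T) = split_imbalance (g \<circ> p) {..<n} T"
    using split_imbalance_image[OF inj T(1)] onto by simp
  have "sum g (p ` T) \<le> sum g S"
    using assms(5)[OF U] T_nonpos U_imbalance U(1) by (simp add: split_imbalance_eq)
  moreover have "split_imbalance g {1..n} S \<le> 0"
    using assms(2,4) by (simp add: split_imbalance_eq)
  ultimately have "(split_imbalance g {1..n} S)\<^sup>2 \<le> (split_imbalance g {1..n} (p ` T))\<^sup>2"
    using assms(2) U(1) by (intro split_imbalance_sq_le_of_sum_le) auto
  also have "\<dots> \<le> (\<Sum>i<m. (g (p (2*i+1)) - g (p (2*i)))\<^sup>2)"
    using T_bound U_imbalance by simp
  also have "\<dots> = (\<Sum>i=1..n div 2. (order_stat g n (2*i) - order_stat g n (2*i - 1))\<^sup>2)"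
    using sum_sq_order_stat_pair_gaps[OF n, of g "g \<circ> p"] order_stat_p by (simp add: m_def)
  finally show ?thesis
    by (simp add: split_imbalance_def)
qed

end
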